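(* Let $C\subset\mathbb{R}^2$ be a centrally symmetric convex body and $P=(G,p,r)$ a $C$-packing. If $C$ is not a parallelogram, then $(G,p)$ is a planar framework.
   Context: A centrally symmetric convex body is a compact convex set with non-empty interior and $C=-C$. A $C$-packing $(G,p,r)$ is a finite family $\{r_vC+p_v:v\in V\}$ ($r_v>0$, $p_v\in\mathbb{R}^2$) with pairwise disjoint interiors, whose contact graph $G=(V,E)$ has $vw\in E$ iff $r_vC+p_v$ and $r_wC+p_w$ intersect. A framework $(G,p)$ is planar if $p_v\ne p_w$ for distinct $v,w$ and the segments $[p_v,p_w]$, $vw\in E$, intersect each other only at common endpoints. *)

theory Defs
  imports "HOL-Analysis.Analysis"
begin

definition cs_convex_body :: "(real^2) set \<Rightarrow> bool" where
  "cs_convex_body C \<longleftrightarrow> compact C \<and> convex C \<and> interior C \<noteq> {} \<and> uminus ` C = C"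

definition parallelogram :: "(real^2) set \<Rightarrow> bool" where
  "parallelogram S \<longleftrightarrow> (\<exists>a u v. u$1 * v$2 - u$2 * v$1 \<noteq> 0 \<and>
       S = convex hull {a, a + u, a + u + v, a + v})"

definition hcopy :: "(real^2) set \<Rightarrow> real \<Rightarrow> real^2 \<Rightarrow> (real^2) set" where
  "hcopy C r p = (\<lambda>x. r *\<^sub>R x + p) ` C"

definition C_packing ::
  "(real^2) set \<Rightarrow> 'v set \<Rightarrow> ('v \<times> 'v) set \<Rightarrow> ('v \<Rightarrow> real^2) \<Rightarrow> ('v \<Rightarrow> real) \<Rightarrow> bool" where
  "C_packing C V E p r \<longleftrightarrow>
     finite V \<and> (\<forall>v\<in>V. r v > 0) \<and>
     (\<forall>v\<in>V. \<forall>w\<in>V. v \<noteq> w \<longrightarrow>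
        interior (hcopy C (r v) (p v)) \<inter> interior (hcopy C (r w) (p w)) = {}) \<and>
     E = {(v, w). v \<in> V \<and> w \<in> V \<and> v \<noteq> w \<and>
                  hcopy C (r v) (p v) \<inter> hcopy C (r w) (p w) \<noteq> {}}"

definition planar_framework ::
  "'v set \<Rightarrow> ('v \<times> 'v) set \<Rightarrow> ('v \<Rightarrow> real^2) \<Rightarrow> bool" where
  "planar_framework V E p \<longleftrightarrow>
     inj_on p V \<and>
     (\<forall>a b c d. (a, b) \<in> E \<and> (c, d) \<in> E \<and> {a, b} \<noteq> {c, d} \<longrightarrow>
        closed_segment (p a) (p b) \<inter> closed_segment (p c) (p d) \<subseteq> p ` ({a, b} \<inter> {c, d}))"

end

theory Submission
  imports Defs
begin

(*
  The gauge N of C is a norm with unit ball C, and r C + p is the N-ball of radius r about p.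
  Disjoint interiors mean N (p v - p w) >= r v + r w, with equality exactly along edges.
  Two edges at a common vertex x could only overlap if they left p x in the same direction,
  and then N (p b - p d) = |r b - r d| < r b + r d.  If edges ab and cd with four distinct ends
  cross at y, the two tight edges and the four separated non-edges force every triangle
  inequality through y to be tight.  Hence N is additive on each quadrant spanned by
  u = (p a - y) / r a and w = (p c - y) / r c, i.e. N (s u + t w) = |s| + |t|, so that
  C = conv {u, w, -u, -w} is a parallelogram.
*)

locale symmetric_convex_body =
  fixes C :: "'a::real_normed_vector set"
  assumes convex_C: "convex C" and closed_C: "closed C"
    and zero_in_interior: "0 \<in> interior C" and uminus_C: "uminus ` C = C"
begin

definition scales :: "'a \<Rightarrow> real set" where
  "scales x = {t. 0 < t \<and> inverse t *\<^sub>R x \<in> C}"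

definition cnorm :: "'a \<Rightarrow> real" where
  "cnorm x = Inf (scales x)"

lemma zero_in_C: "0 \<in> C"
  using zero_in_interior interior_subset by blast

lemma minus_in_C: "x \<in> C \<Longrightarrow> - x \<in> C"
  using uminus_C by (metis imageI)

lemma in_scales_if_norm_less:
  assumes "0 < \<epsilon>" "cball 0 \<epsilon> \<subseteq> C" "norm x / \<epsilon> < t"
  shows "t \<in> scales x"
proof -
  have "0 < t" using divide_nonneg_pos[OF norm_ge_zero assms(1), of x] assms(3) by linarith
  moreover have "norm (inverse t *\<^sub>R x) \<le> \<epsilon>"
    using assms(1,3) \<open>0 < t\<close> by (simp add: field_simps)
  ultimately show ?thesis using assms(2) by (auto simp: scales_def)
qed

lemma scales_nonempty: "scales x \<noteq> {}"
proof -
  obtain \<epsilon> where "0 < \<epsilon>" "cball 0 \<epsilon> \<subseteq> C"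
    using zero_in_interior mem_interior_cball by blast
  then show ?thesis using in_scales_if_norm_less[of \<epsilon> x "norm x / \<epsilon> + 1"] by auto
qed

lemma bdd_below_scales: "bdd_below (scales x)"
  by (auto simp: scales_def bdd_below_def intro: exI[of _ 0])

lemma scales_upward_closed:
  assumes "s \<in> scales x" "s \<le> t"
  shows "t \<in> scales x"
proof -
  have "0 < s" "inverse s *\<^sub>R x \<in> C" using assms(1) by (auto simp: scales_def)
  then have "(s / t) *\<^sub>R (inverse s *\<^sub>R x) + (1 - s / t) *\<^sub>R 0 \<in> C"
    using assms(2) by (intro convexD[OF convex_C _ zero_in_C]) auto
  then show ?thesis using \<open>0 < s\<close> assms(2) by (simp add: scales_def inverse_eq_divide)
qed

lemma cnorm_le: "0 < t \<Longrightarrow> inverse t *\<^sub>R x \<in> C \<Longrightarrow> cnorm x \<le> t"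
  unfolding cnorm_def by (rule cInf_lower[OF _ bdd_below_scales]) (simp add: scales_def)

lemma cnorm_less_imp_in_scales: "cnorm x < t \<Longrightarrow> t \<in> scales x"
  unfolding cnorm_def using scales_upward_closed
  by (meson cInf_lessD less_imp_le scales_nonempty)

lemma cnorm_nonneg: "0 \<le> cnorm x"
  unfolding cnorm_def by (rule cInf_greatest[OF scales_nonempty]) (auto simp: scales_def)

lemma cnorm_le_norm:
  assumes "0 < \<epsilon>" "cball 0 \<epsilon> \<subseteq> C"
  shows "cnorm x \<le> norm x / \<epsilon>"
proof (rule dense_ge)
  fix t assume "norm x / \<epsilon> < t"
  then have "t \<in> scales x" by (rule in_scales_if_norm_less[OF assms])
  then show "cnorm x \<le> t" by (simp add: scales_def cnorm_le)
qed

lemma cnorm_le_one_iff: "cnorm x \<le> 1 \<longleftrightarrow> x \<in> C"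
proof
  assume "cnorm x \<le> 1"
  moreover have "0 < inverse (real (Suc n))" for n by simp
  ultimately have "cnorm x < 1 + inverse (Suc n)" for n
    by (metis add_le_less_mono add_0_right)
  then have "inverse (1 + inverse (Suc n)) *\<^sub>R x \<in> C" for n
    using cnorm_less_imp_in_scales[of x "1 + inverse (Suc n)"] by (simp add: scales_def)
  moreover have "(\<lambda>n. inverse (1 + inverse (Suc n)) *\<^sub>R x) \<longlonglongrightarrow> inverse (1 + 0) *\<^sub>R x"
    using tendsto_add[OF tendsto_const LIMSEQ_inverse_real_of_nat, of 1]
    by (intro tendsto_scaleR[OF tendsto_inverse tendsto_const]) simp_all
  ultimately have "inverse (1 + 0) *\<^sub>R x \<in> C"
    by (rule closed_sequentially[OF closed_C])
  then show "x \<in> C" by simp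
qed (use cnorm_le[of 1 x] in simp)

lemma cnorm_minus: "cnorm (- x) = cnorm x"
proof -
  have "scales (- x) = scales x"
    unfolding scales_def using minus_in_C by force
  then show ?thesis by (simp add: cnorm_def)
qed

lemma cnorm_minus_commute: "cnorm (x - y) = cnorm (y - x)"
  by (metis cnorm_minus minus_diff_eq)

lemma cnorm_zero: "cnorm 0 = 0"
proof -
  have "scales 0 = {0<..}" unfolding scales_def using zero_in_C by auto
  then show ?thesis by (simp add: cnorm_def)
qed

lemma cnorm_scaleR_pos_le:
  assumes "0 < c"
  shows "cnorm (c *\<^sub>R x) \<le> c * cnorm x"
proof -
  have "cnorm (c *\<^sub>R x) / c \<le> t" if "t \<in> scales x" for t
  proof -
    have "0 < t" "inverse t *\<^sub>R x \<in> C" using that by (auto simp: scales_def)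
    moreover have "inverse (c * t) *\<^sub>R (c *\<^sub>R x) = inverse t *\<^sub>R x" using assms by simp
    ultimately have "cnorm (c *\<^sub>R x) \<le> c * t" using assms by (metis cnorm_le mult_pos_pos)
    then show ?thesis using assms by (simp add: divide_le_eq mult.commute)
  qed
  then have "cnorm (c *\<^sub>R x) / c \<le> cnorm x"
    unfolding cnorm_def[of x] by (intro cInf_greatest[OF scales_nonempty])
  then show ?thesis using assms by (simp add: divide_le_eq mult.commute)
qed

lemma cnorm_scaleR: "cnorm (c *\<^sub>R x) = \<bar>c\<bar> * cnorm x"
proof -
  have pos: "cnorm (c *\<^sub>R x) = c * cnorm x" if "0 < c" for c x
  proof -
    have "cnorm x \<le> inverse c * cnorm (c *\<^sub>R x)"
      using cnorm_scaleR_pos_le[of "inverse c" "c *\<^sub>R x"] that by simp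
    then show ?thesis
      using cnorm_scaleR_pos_le[OF that, of x] that by (simp add: field_simps)
  qed
  consider "c = 0" | "0 < c" | "c < 0" by linarith
  then show ?thesis
  proof cases
    case 3
    then show ?thesis using pos[of "- c" x] by (simp add: cnorm_minus)
  qed (simp_all add: cnorm_zero pos)
qed

lemma cnorm_triangle: "cnorm (x + y) \<le> cnorm x + cnorm y"
proof -
  have sum: "cnorm (x + y) \<le> s + t" if "s \<in> scales x" "t \<in> scales y" for s t
  proof -
    have st: "0 < s" "inverse s *\<^sub>R x \<in> C" "0 < t" "inverse t *\<^sub>R y \<in> C"
      using that by (auto simp: scales_def)
    then have "(s / (s + t)) *\<^sub>R (inverse s *\<^sub>R x) + (t / (s + t)) *\<^sub>R (inverse t *\<^sub>R y) \<in> C"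
      by (intro convexD[OF convex_C]) (auto simp: add_divide_distrib[symmetric])
    moreover have "(s / (s + t)) *\<^sub>R (inverse s *\<^sub>R x) + (t / (s + t)) *\<^sub>R (inverse t *\<^sub>R y)
        = inverse (s + t) *\<^sub>R (x + y)"
      using st by (simp add: scaleR_add_right field_simps)
    ultimately show ?thesis using st by (intro cnorm_le) auto
  qed
  have "cnorm (x + y) - cnorm y \<le> s" if "s \<in> scales x" for s
  proof -
    have "cnorm (x + y) - s \<le> cnorm y"
      unfolding cnorm_def[of y] using sum that
      by (intro cInf_greatest[OF scales_nonempty]) force
    then show ?thesis by simp
  qed
  then have "cnorm (x + y) - cnorm y \<le> cnorm x"
    unfolding cnorm_def[of x] by (intro cInf_greatest[OF scales_nonempty])
  then show ?thesis by simp
qed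

lemma cnorm_triangle_sub: "cnorm (x - z) \<le> cnorm (x - y) + cnorm (y - z)"
  using cnorm_triangle[of "x - y" "y - z"] by simp

lemma cnorm_on_closed_segment:
  assumes "y \<in> closed_segment p q"
  obtains t where "0 \<le> t" "t \<le> 1" "p - y = t *\<^sub>R (p - q)" "q - y = - ((1 - t) *\<^sub>R (p - q))"
    "cnorm (p - y) = t * cnorm (p - q)" "cnorm (q - y) = (1 - t) * cnorm (p - q)"
proof -
  obtain t where t: "0 \<le> t" "t \<le> 1" "y = (1 - t) *\<^sub>R p + t *\<^sub>R q"
    using assms in_segment(1) by blast
  then have py: "p - y = t *\<^sub>R (p - q)" and qy: "q - y = - ((1 - t) *\<^sub>R (p - q))"
    by (simp_all add: algebra_simps)
  show ?thesis
    by (rule that[OF t(1,2) py qy])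
      (simp_all only: py qy cnorm_scaleR cnorm_minus abs_of_nonneg t(1,2) diff_ge_0_iff_ge)
qed

lemma cnorm_split_on_segment:
  assumes "y \<in> closed_segment p q"
  shows "cnorm (p - y) + cnorm (q - y) = cnorm (p - q)"
proof (rule cnorm_on_closed_segment[OF assms])
  fix t assume "cnorm (p - y) = t * cnorm (p - q)" "cnorm (q - y) = (1 - t) * cnorm (p - q)"
  then show ?thesis by (simp add: algebra_simps)
qed

lemma cnorm_weighted_opposite_on_segment:
  assumes "y \<in> closed_segment p q"
  shows "cnorm (p - y) *\<^sub>R (q - y) = - (cnorm (q - y) *\<^sub>R (p - y))"
proof (rule cnorm_on_closed_segment[OF assms])
  fix t assume "p - y = t *\<^sub>R (p - q)" "q - y = - ((1 - t) *\<^sub>R (p - q))"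
    "cnorm (p - y) = t * cnorm (p - q)" "cnorm (q - y) = (1 - t) * cnorm (p - q)"
  then show ?thesis by (simp only: scaleR_scaleR scaleR_minus_right) (simp add: mult_ac)
qed

lemma cnorm_cone_lower_bound:
  assumes "cnorm x = 1" "cnorm z = 1" "0 < \<alpha>" "cnorm (\<alpha> *\<^sub>R x + \<beta> *\<^sub>R z) = \<alpha> + \<beta>"
    and "0 < a" "b * \<alpha> \<le> a * \<beta>"
  shows "a + b \<le> cnorm (a *\<^sub>R x + b *\<^sub>R z)"
proof -
  define c where "c = \<beta> - \<alpha> * b / a"
  have "0 \<le> c" using assms(5,6) by (simp add: c_def field_simps)
  have "\<alpha> *\<^sub>R x + \<beta> *\<^sub>R z = (\<alpha> / a) *\<^sub>R (a *\<^sub>R x + b *\<^sub>R z) + c *\<^sub>R z"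
    using assms(5) by (simp add: c_def algebra_simps)
  then have "\<alpha> + \<beta> \<le> (\<alpha> / a) * cnorm (a *\<^sub>R x + b *\<^sub>R z) + c"
    using cnorm_triangle[of "(\<alpha> / a) *\<^sub>R (a *\<^sub>R x + b *\<^sub>R z)" "c *\<^sub>R z"] assms \<open>0 \<le> c\<close>
    by (simp add: cnorm_scaleR)
  then have "a * (\<alpha> + \<beta>) \<le> a * ((\<alpha> / a) * cnorm (a *\<^sub>R x + b *\<^sub>R z) + c)"
    using assms(5) by (simp add: mult_left_mono)
  also have "\<dots> = \<alpha> * cnorm (a *\<^sub>R x + b *\<^sub>R z) + a * \<beta> - \<alpha> * b"
    using assms(5) by (simp add: c_def field_simps)
  finally have "\<alpha> * (a + b) \<le> \<alpha> * cnorm (a *\<^sub>R x + b *\<^sub>R z)"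
    by (simp add: algebra_simps)
  then show ?thesis using assms(3) by simp
qed

lemma cnorm_additive_on_cone:
  assumes "cnorm x = 1" "cnorm z = 1" "0 < \<alpha>" "0 < \<beta>" "cnorm (\<alpha> *\<^sub>R x + \<beta> *\<^sub>R z) = \<alpha> + \<beta>"
    and "0 \<le> a" "0 \<le> b"
  shows "cnorm (a *\<^sub>R x + b *\<^sub>R z) = a + b"
proof (rule antisym)
  show "cnorm (a *\<^sub>R x + b *\<^sub>R z) \<le> a + b"
    using cnorm_triangle[of "a *\<^sub>R x" "b *\<^sub>R z"] assms by (simp add: cnorm_scaleR)
  consider "a = 0" | "0 < a" "b * \<alpha> \<le> a * \<beta>" | "0 < b" "a * \<beta> \<le> b * \<alpha>"
  proof (cases "b * \<alpha> \<le> a * \<beta>")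
    case True
    then show ?thesis using that(1,2) assms(6) by (cases "a = 0") auto
  next
    case False
    then have "0 < b" using assms(4,6,7) mult_nonneg_nonneg[of a \<beta>] by (cases "b = 0") auto
    then show ?thesis using that(3) False by simp
  qed
  then show "a + b \<le> cnorm (a *\<^sub>R x + b *\<^sub>R z)"
  proof cases
    case 1
    then show ?thesis using assms(2,7) by (simp add: cnorm_scaleR)
  next
    case 2
    then show ?thesis using cnorm_cone_lower_bound assms(1-3,5) by blast
  next
    case 3
    then show ?thesis using cnorm_cone_lower_bound[of z x \<beta> \<alpha> b a] assms(1,2,4,5)
      by (simp add: add.commute)
  qed
qed

lemma cnorm_l1_if_diagonals:
  assumes "cnorm u = 1" "cnorm w = 1" "cnorm (u + w) = 2" "cnorm (u - w) = 2"
  shows "cnorm (\<alpha> *\<^sub>R u + \<beta> *\<^sub>R w) = \<bar>\<alpha>\<bar> + \<bar>\<beta>\<bar>"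
proof -
  have "cnorm (- w) = 1" using assms(2) by (simp add: cnorm_minus)
  then have quadrants: "cnorm (a *\<^sub>R u + b *\<^sub>R w) = a + b" "cnorm (a *\<^sub>R u - b *\<^sub>R w) = a + b"
    if "0 \<le> a" "0 \<le> b" for a b
    using cnorm_additive_on_cone[of u w 1 1 a b] cnorm_additive_on_cone[of u "- w" 1 1 a b]
      assms that by simp_all
  have "\<alpha> *\<^sub>R u + \<beta> *\<^sub>R w = - ((- \<alpha>) *\<^sub>R u - \<beta> *\<^sub>R w)" by simp
  then have flip: "cnorm (\<alpha> *\<^sub>R u + \<beta> *\<^sub>R w) = cnorm ((- \<alpha>) *\<^sub>R u - \<beta> *\<^sub>R w)"
    by (simp only: cnorm_minus)
  show ?thesis
    by (cases "0 \<le> \<alpha>"; cases "0 \<le> \<beta>")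
      (use quadrants[of \<alpha> "- \<beta>"] quadrants[of "- \<alpha>" \<beta>] quadrants[of "- \<alpha>" "- \<beta>"] quadrants[of \<alpha> \<beta>]
        flip in simp_all)
qed

lemma tight_segments_meet_at_common_end:
  assumes "0 < rb" "0 < rd"
    and "cnorm (pb - pa) = ra + rb" "cnorm (pd - pa) = ra + rd" "rb + rd \<le> cnorm (pb - pd)"
  shows "closed_segment pa pb \<inter> closed_segment pa pd \<subseteq> {pa}"
proof (rule subsetI, rule ccontr)
  fix y assume y: "y \<in> closed_segment pa pb \<inter> closed_segment pa pd" and "y \<notin> {pa}"
  obtain s where s: "0 \<le> s" "y - pa = s *\<^sub>R (pb - pa)"
    using y by (force simp: in_segment algebra_simps)
  obtain t where t: "0 \<le> t" "y - pa = t *\<^sub>R (pd - pa)"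
    using y by (force simp: in_segment algebra_simps)
  have "0 < t" using t \<open>y \<notin> {pa}\<close> by (cases "t = 0") auto
  have "s * (ra + rb) = t * (ra + rd)"
    using arg_cong[of _ _ cnorm, OF s(2)[symmetric, unfolded t(2)]] s(1) t(1) assms(3,4)
    by (simp add: cnorm_scaleR)
  then have ratio: "s / t * (ra + rb) = ra + rd" using \<open>0 < t\<close> by (simp add: field_simps)
  have "pd - pa = inverse t *\<^sub>R (y - pa)" using t(2) \<open>0 < t\<close> by simp
  also have "\<dots> = (s / t) *\<^sub>R (pb - pa)" using s(2) by (simp add: divide_inverse_commute)
  finally have "pd - pa = (s / t) *\<^sub>R (pb - pa)" .
  then have "pb - pd = (1 - s / t) *\<^sub>R (pb - pa)" by (simp add: algebra_simps)
  then have "cnorm (pb - pd) = \<bar>(1 - s / t) * (ra + rb)\<bar>"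
    using assms(1,3,4) ratio cnorm_nonneg[of "pb - pa"] by (simp add: cnorm_scaleR abs_mult)
  also have "\<dots> = \<bar>rb - rd\<bar>" using ratio by (simp add: left_diff_distrib)
  finally show False using assms(1,2,5) by simp
qed

lemma crossing_tight_segments:
  assumes "0 < ra" "0 < rc" "0 < rd"
    and "cnorm (pa - pb) \<le> ra + rb" "cnorm (pc - pd) \<le> rc + rd"
    and "ra + rc \<le> cnorm (pa - pc)" "ra + rd \<le> cnorm (pa - pd)"
    and "rb + rc \<le> cnorm (pb - pc)" "rb + rd \<le> cnorm (pb - pd)"
    and "y \<in> closed_segment pa pb" "y \<in> closed_segment pc pd"
  obtains u w where "cnorm u = 1" "cnorm w = 1" "cnorm (u + w) = 2" "cnorm (u - w) = 2"
proof -
  have "cnorm (pa - y) + cnorm (pb - y) = cnorm (pa - pb)"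
    "cnorm (pc - y) + cnorm (pd - y) = cnorm (pc - pd)"
    using assms(10,11) by (simp_all add: cnorm_split_on_segment)
  moreover have triangle: "cnorm (p - q) \<le> cnorm (p - y) + cnorm (q - y)" for p q
    using cnorm_triangle_sub[of p q y] by (simp add: cnorm_minus_commute)
  ultimately have tight: "cnorm (pa - y) = ra" "cnorm (pc - y) = rc" "cnorm (pd - y) = rd"
    "cnorm (pa - pc) = ra + rc" "cnorm (pa - pd) = ra + rd"
    using assms(4-9) triangle[of pa pc] triangle[of pa pd] triangle[of pb pc] triangle[of pb pd]
    by linarith+
  define u where "u = inverse ra *\<^sub>R (pa - y)"
  define w where "w = inverse rc *\<^sub>R (pc - y)"
  have u: "cnorm u = 1" "ra *\<^sub>R u = pa - y" using assms(1) tight(1) by (simp_all add: u_def cnorm_scaleR)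
  have w: "cnorm w = 1" "rc *\<^sub>R w = pc - y" using assms(2) tight(2) by (simp_all add: w_def cnorm_scaleR)
  have "rc *\<^sub>R (pd - y) = - (rd *\<^sub>R (pc - y))"
    using cnorm_weighted_opposite_on_segment[OF assms(11)] tight(2,3) by simp
  then have "rd *\<^sub>R w = inverse rc *\<^sub>R (- (rc *\<^sub>R (pd - y)))"
    by (simp add: w_def)
  also have "\<dots> = - (pd - y)" using assms(2) by simp
  finally have rd_w: "rd *\<^sub>R w = - (pd - y)" .
  have "pa - pc = ra *\<^sub>R u + rc *\<^sub>R (- w)" "pa - pd = ra *\<^sub>R u + rd *\<^sub>R w"
    unfolding scaleR_minus_right u(2) w(2) rd_w by simp_all
  then have "cnorm (1 *\<^sub>R u + 1 *\<^sub>R (- w)) = 2" "cnorm (1 *\<^sub>R u + 1 *\<^sub>R w) = 2"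
    using cnorm_additive_on_cone[of u "- w" ra rc 1 1] cnorm_additive_on_cone[of u w ra rd 1 1]
      u(1) w(1) tight assms(1-3) by (simp_all add: cnorm_minus)
  then show ?thesis using that u(1) w(1) by simp
qed

end

lemma scaleR_sum_mem_convex_hull_cross:
  assumes "\<bar>\<alpha>\<bar> + \<bar>\<beta>\<bar> \<le> 1"
  shows "\<alpha> *\<^sub>R u + \<beta> *\<^sub>R w \<in> convex hull {u, w, - u, - w}"
proof -
  define e1 where "e1 = (if 0 \<le> \<alpha> then u else - u)"
  define e2 where "e2 = (if 0 \<le> \<beta> then w else - w)"
  have "(1 / 2) *\<^sub>R u + (1 / 2) *\<^sub>R (- u) \<in> convex hull {u, w, - u, - w}"
    by (intro convexD convex_convex_hull) (auto intro: hull_inc)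
  then have "convex hull {e1, e2, 0} \<subseteq> convex hull {u, w, - u, - w}"
    by (intro hull_minimal) (auto simp: e1_def e2_def intro: hull_inc)
  moreover have "\<alpha> *\<^sub>R u + \<beta> *\<^sub>R w = \<bar>\<alpha>\<bar> *\<^sub>R e1 + \<bar>\<beta>\<bar> *\<^sub>R e2 + (1 - \<bar>\<alpha>\<bar> - \<bar>\<beta>\<bar>) *\<^sub>R 0"
    by (simp add: e1_def e2_def)
  then have "\<alpha> *\<^sub>R u + \<beta> *\<^sub>R w \<in> convex hull {e1, e2, 0}"
    unfolding convex_hull_3 using assms
    by (intro CollectI exI[of _ "\<bar>\<alpha>\<bar>"] exI[of _ "\<bar>\<beta>\<bar>"] exI[of _ "1 - \<bar>\<alpha>\<bar> - \<bar>\<beta>\<bar>"]) auto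
  ultimately show ?thesis by blast
qed

lemma exists_coordinates_2:
  fixes u w x :: "real^2"
  assumes "u$1 * w$2 - u$2 * w$1 \<noteq> 0"
  shows "\<exists>\<alpha> \<beta>. x = \<alpha> *\<^sub>R u + \<beta> *\<^sub>R w"
proof (intro exI)
  let ?d = "u$1 * w$2 - u$2 * w$1"
  have "(x$1 * w$2 - x$2 * w$1) * u$i + (u$1 * x$2 - u$2 * x$1) * w$i = ?d * x$i" if "i = 1 \<or> i = 2" for i
    using that by (auto simp: algebra_simps)
  then show "x = ((x$1 * w$2 - x$2 * w$1) / ?d) *\<^sub>R u + ((u$1 * x$2 - u$2 * x$1) / ?d) *\<^sub>R w"
    using assms by (auto simp: vec_eq_iff forall_2 add_divide_distrib[symmetric] divide_eq_eq mult.commute)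
qed

lemma parallelogram_convex_hull_cross:
  fixes u w :: "real^2"
  assumes "u$1 * w$2 - u$2 * w$1 \<noteq> 0"
  shows "parallelogram (convex hull {u, w, - u, - w})"
  unfolding parallelogram_def
proof (intro exI conjI)
  show "(w - u)$1 * (- w - u)$2 - (w - u)$2 * (- w - u)$1 \<noteq> 0"
    using assms by (simp add: algebra_simps)
  have "{u, u + (w - u), u + (w - u) + (- w - u), u + (- w - u)} = {u, w, - u, - w}"
    by (simp add: algebra_simps)
  then show "convex hull {u, w, - u, - w}
      = convex hull {u, u + (w - u), u + (w - u) + (- w - u), u + (- w - u)}"
    by simp
qed

lemma planar_frameworkI:
  fixes p :: "'v \<Rightarrow> real^2"
  assumes "inj_on p V" "sym E"
    and common_end: "\<And>x b d. (x, b) \<in> E \<Longrightarrow> (x, d) \<in> E \<Longrightarrow> b \<noteq> d \<Longrightarrow>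
      closed_segment (p x) (p b) \<inter> closed_segment (p x) (p d) \<subseteq> {p x}"
    and disjoint_ends: "\<And>a b c d. (a, b) \<in> E \<Longrightarrow> (c, d) \<in> E \<Longrightarrow> {a, b} \<inter> {c, d} = {} \<Longrightarrow>
      closed_segment (p a) (p b) \<inter> closed_segment (p c) (p d) = {}"
  shows "planar_framework V E p"
  unfolding planar_framework_def
proof (intro conjI allI impI)
  fix a b c d
  assume edges: "(a, b) \<in> E \<and> (c, d) \<in> E \<and> {a, b} \<noteq> {c, d}"
  show "closed_segment (p a) (p b) \<inter> closed_segment (p c) (p d) \<subseteq> p ` ({a, b} \<inter> {c, d})"
  proof (cases "{a, b} \<inter> {c, d} = {}")
    case True
    then show ?thesis using edges disjoint_ends by blast
  next
    case False
    then obtain x where x: "x \<in> {a, b}" "x \<in> {c, d}" by blast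
    define b' where "b' = (if x = a then b else a)"
    define d' where "d' = (if x = c then d else c)"
    have ab: "{a, b} = {x, b'}" and cd: "{c, d} = {x, d'}"
      using x by (auto simp: b'_def d'_def)
    have segments: "closed_segment (p a) (p b) = closed_segment (p x) (p b')"
      "closed_segment (p c) (p d) = closed_segment (p x) (p d')"
      using ab cd by (auto simp: doubleton_eq_iff closed_segment_commute)
    have "(x, b') \<in> E" "(x, d') \<in> E"
      using edges x \<open>sym E\<close> by (auto simp: b'_def d'_def dest: symD)
    moreover have "b' \<noteq> d'" using edges ab cd by auto
    ultimately have "closed_segment (p a) (p b) \<inter> closed_segment (p c) (p d) \<subseteq> {p x}"
      unfolding segments by (rule common_end)
    moreover have "p x \<in> p ` ({a, b} \<inter> {c, d})" using x by blast
    ultimately show ?thesis by blast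
  qed
qed (fact assms(1))

lemma C_packing_radius_pos: "C_packing C V E p r \<Longrightarrow> v \<in> V \<Longrightarrow> 0 < r v"
  by (simp add: C_packing_def)

lemma sym_C_packing: "C_packing C V E p r \<Longrightarrow> sym E"
  by (auto simp: C_packing_def intro: symI)

locale planar_cs_body =
  fixes C :: "(real^2) set"
  assumes cs_convex_body: "cs_convex_body C"

sublocale planar_cs_body \<subseteq> symmetric_convex_body C
proof
  have "convex C" "interior C \<noteq> {}" "uminus ` C = C"
    using cs_convex_body by (auto simp: cs_convex_body_def)
  then obtain z where "z \<in> interior C" by blast
  moreover have "- z \<in> interior C"
    using interior_negations[of C] \<open>uminus ` C = C\<close> \<open>z \<in> interior C\<close> by (metis imageI)
  ultimately have "(1 / 2) *\<^sub>R z + (1 / 2) *\<^sub>R (- z) \<in> interior C"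
    using \<open>convex C\<close> by (intro convexD convex_interior) auto
  then show "0 \<in> interior C" by simp
qed (use cs_convex_body in \<open>auto simp: cs_convex_body_def compact_imp_closed\<close>)

context planar_cs_body
begin

lemma parallelogram_if_cnorm_diagonals:
  assumes "cnorm u = 1" "cnorm w = 1" "cnorm (u + w) = 2" "cnorm (u - w) = 2"
  shows "parallelogram C"
proof -
  note l1 = cnorm_l1_if_diagonals[OF assms]
  have det: "u$1 * w$2 - u$2 * w$1 \<noteq> 0"
  proof
    assume "u$1 * w$2 - u$2 * w$1 = 0"
    then have "w$2 *\<^sub>R u + (- u$2) *\<^sub>R w = 0" "w$1 *\<^sub>R u + (- u$1) *\<^sub>R w = 0"
      by (auto simp: vec_eq_iff forall_2 algebra_simps)
    then have "u$1 = 0" "u$2 = 0"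
      using l1[of "w$2" "- u$2"] l1[of "w$1" "- u$1"] by (simp_all add: cnorm_zero)
    then have "u = 0" by (simp add: vec_eq_iff forall_2)
    then show False using assms(1) by (simp add: cnorm_zero)
  qed
  have "C = convex hull {u, w, - u, - w}"
  proof
    show "C \<subseteq> convex hull {u, w, - u, - w}"
    proof
      fix x assume "x \<in> C"
      obtain \<alpha> \<beta> where "x = \<alpha> *\<^sub>R u + \<beta> *\<^sub>R w" using exists_coordinates_2[OF det] by blast
      moreover have "\<bar>\<alpha>\<bar> + \<bar>\<beta>\<bar> \<le> 1"
        using \<open>x \<in> C\<close> calculation l1[of \<alpha> \<beta>] cnorm_le_one_iff[of x] by simp
      ultimately show "x \<in> convex hull {u, w, - u, - w}"
        using scaleR_sum_mem_convex_hull_cross by blast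
    qed
    show "convex hull {u, w, - u, - w} \<subseteq> C"
      using assms(1,2) convex_C by (intro hull_minimal) (auto simp: cnorm_le_one_iff[symmetric] cnorm_minus)
  qed
  then show ?thesis using parallelogram_convex_hull_cross[OF det] by simp
qed

lemma mem_hcopy_iff:
  assumes "0 < r"
  shows "z \<in> hcopy C r p \<longleftrightarrow> cnorm (z - p) \<le> r"
proof -
  have "z \<in> hcopy C r p \<longleftrightarrow> inverse r *\<^sub>R (z - p) \<in> C"
  proof
    assume "z \<in> hcopy C r p"
    then obtain c where "c \<in> C" "z = r *\<^sub>R c + p" by (auto simp: hcopy_def)
    then show "inverse r *\<^sub>R (z - p) \<in> C" using assms by simp
  next
    assume "inverse r *\<^sub>R (z - p) \<in> C"
    moreover have "z = r *\<^sub>R (inverse r *\<^sub>R (z - p)) + p" using assms by simp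
    ultimately show "z \<in> hcopy C r p" unfolding hcopy_def by blast
  qed
  also have "\<dots> \<longleftrightarrow> cnorm (z - p) / r \<le> 1"
    using assms unfolding cnorm_le_one_iff[symmetric] cnorm_scaleR
    by (simp add: divide_inverse_commute)
  also have "\<dots> \<longleftrightarrow> cnorm (z - p) \<le> r"
    using assms by simp
  finally show ?thesis .
qed

lemma interior_hcopyI:
  assumes "0 < r" "cnorm (z - p) < r"
  shows "z \<in> interior (hcopy C r p)"
proof -
  obtain \<epsilon> where \<epsilon>: "0 < \<epsilon>" "cball 0 \<epsilon> \<subseteq> C"
    using zero_in_interior mem_interior_cball by blast
  have "ball z (\<epsilon> * (r - cnorm (z - p))) \<subseteq> hcopy C r p"
  proof
    fix z' assume "z' \<in> ball z (\<epsilon> * (r - cnorm (z - p)))"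
    then have "norm (z' - z) / \<epsilon> < r - cnorm (z - p)"
      using \<epsilon>(1) by (simp add: dist_norm norm_minus_commute divide_less_eq mult.commute)
    then have "cnorm (z' - p) < r"
      using cnorm_triangle_sub[of z' p z] cnorm_le_norm[OF \<epsilon>, of "z' - z"] by linarith
    then show "z' \<in> hcopy C r p" using assms(1) by (simp add: mem_hcopy_iff)
  qed
  moreover have "0 < \<epsilon> * (r - cnorm (z - p))" using \<epsilon>(1) assms(2) by simp
  ultimately show ?thesis unfolding mem_interior by blast
qed

lemma cnorm_ge_if_interiors_disjoint:
  assumes "0 < r" "0 < s" "interior (hcopy C r p) \<inter> interior (hcopy C s q) = {}"
  shows "r + s \<le> cnorm (p - q)"
proof (rule ccontr)
  assume "\<not> r + s \<le> cnorm (p - q)"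
  define z where "z = q + (s / (r + s)) *\<^sub>R (p - q)"
  have "z - p = (s / (r + s) - 1) *\<^sub>R (p - q)" by (simp add: z_def algebra_simps)
  also have "s / (r + s) - 1 = - (r / (r + s))" using assms(1,2) by (simp add: field_simps)
  finally have "z - q = (s / (r + s)) *\<^sub>R (p - q)" "z - p = - ((r / (r + s)) *\<^sub>R (p - q))"
    by (simp_all add: z_def)
  then have "cnorm (z - q) = s / (r + s) * cnorm (p - q)" "cnorm (z - p) = r / (r + s) * cnorm (p - q)"
    using assms(1,2) by (simp_all add: cnorm_scaleR cnorm_minus)
  moreover have bound: "k * cnorm (p - q) < k * (r + s)" if "0 < k" for k
    using that \<open>\<not> r + s \<le> cnorm (p - q)\<close> by simp
  ultimately have "cnorm (z - q) < s" "cnorm (z - p) < r"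
    using bound[of "s / (r + s)"] bound[of "r / (r + s)"] assms(1,2) by simp_all
  then show False using assms interior_hcopyI by blast
qed

lemma cnorm_le_if_hcopies_meet:
  assumes "0 < r" "0 < s" "hcopy C r p \<inter> hcopy C s q \<noteq> {}"
  shows "cnorm (p - q) \<le> r + s"
proof -
  obtain z where "cnorm (z - p) \<le> r" "cnorm (z - q) \<le> s"
    using assms by (auto simp: mem_hcopy_iff)
  then show ?thesis using cnorm_triangle_sub[of p q z] cnorm_minus_commute[of p z] by linarith
qed

lemma C_packing_separated:
  assumes "C_packing C V E p r" "v \<in> V" "w \<in> V" "v \<noteq> w"
  shows "r v + r w \<le> cnorm (p v - p w)"
  using assms by (intro cnorm_ge_if_interiors_disjoint) (auto simp: C_packing_def)

lemma C_packing_edgeD: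
  assumes "C_packing C V E p r" "(v, w) \<in> E"
  shows "v \<in> V" "w \<in> V" "v \<noteq> w" "cnorm (p v - p w) = r v + r w"
proof -
  show "v \<in> V" "w \<in> V" "v \<noteq> w" using assms by (auto simp: C_packing_def)
  moreover have "cnorm (p v - p w) \<le> r v + r w"
    using assms by (intro cnorm_le_if_hcopies_meet) (auto simp: C_packing_def)
  ultimately show "cnorm (p v - p w) = r v + r w"
    using C_packing_separated[OF assms(1)] by (simp add: antisym)
qed


lemma inj_on_C_packing:
  assumes "C_packing C V E p r"
  shows "inj_on p V"
proof (rule inj_onI, rule ccontr)
  fix v w assume "v \<in> V" "w \<in> V" "p v = p w" "v \<noteq> w"
  then have "r v + r w \<le> cnorm (p v - p w)" by (intro C_packing_separated[OF assms])
  then show False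
    using C_packing_radius_pos[OF assms \<open>v \<in> V\<close>] C_packing_radius_pos[OF assms \<open>w \<in> V\<close>]
      \<open>p v = p w\<close> by (simp add: cnorm_zero)
qed

lemma C_packing_segments_common_end:
  assumes packing: "C_packing C V E p r"
    and xb: "(x, b) \<in> E" and xd: "(x, d) \<in> E" and "b \<noteq> d"
  shows "closed_segment (p x) (p b) \<inter> closed_segment (p x) (p d) \<subseteq> {p x}"
proof (rule tight_segments_meet_at_common_end[where ra = "r x" and rb = "r b" and rd = "r d"])
  note edge = C_packing_edgeD[OF packing]
  show "0 < r b" "0 < r d"
    using C_packing_radius_pos[OF packing] edge(2)[OF xb] edge(2)[OF xd] by simp_all
  show "cnorm (p b - p x) = r x + r b" "cnorm (p d - p x) = r x + r d"
    using edge(4)[OF xb] edge(4)[OF xd] by (simp_all add: cnorm_minus_commute)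
  show "r b + r d \<le> cnorm (p b - p d)"
    using edge(2)[OF xb] edge(2)[OF xd] \<open>b \<noteq> d\<close> by (rule C_packing_separated[OF packing])
qed

lemma C_packing_segments_disjoint:
  assumes packing: "C_packing C V E p r" and "\<not> parallelogram C"
    and ab: "(a, b) \<in> E" and cd: "(c, d) \<in> E" and "{a, b} \<inter> {c, d} = {}"
  shows "closed_segment (p a) (p b) \<inter> closed_segment (p c) (p d) = {}"
proof (rule ccontr)
  note edge = C_packing_edgeD[OF packing] and r_pos = C_packing_radius_pos[OF packing]
  have "a \<noteq> c" "a \<noteq> d" "b \<noteq> c" "b \<noteq> d" using \<open>{a, b} \<inter> {c, d} = {}\<close> by auto
  moreover have V: "a \<in> V" "b \<in> V" "c \<in> V" "d \<in> V"
    using edge(1,2)[OF ab] edge(1,2)[OF cd] by auto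
  ultimately have separations: "r a + r c \<le> cnorm (p a - p c)" "r a + r d \<le> cnorm (p a - p d)"
    "r b + r c \<le> cnorm (p b - p c)" "r b + r d \<le> cnorm (p b - p d)"
    by (simp_all add: C_packing_separated[OF packing])
  have tight: "cnorm (p a - p b) \<le> r a + r b" "cnorm (p c - p d) \<le> r c + r d"
    using edge(4)[OF ab] edge(4)[OF cd] by simp_all
  assume "closed_segment (p a) (p b) \<inter> closed_segment (p c) (p d) \<noteq> {}"
  then obtain y where y: "y \<in> closed_segment (p a) (p b)" "y \<in> closed_segment (p c) (p d)"
    by blast
  obtain u w where "cnorm u = 1" "cnorm w = 1" "cnorm (u + w) = 2" "cnorm (u - w) = 2"
    by (rule crossing_tight_segments[OF r_pos[OF V(1)] r_pos[OF V(3)] r_pos[OF V(4)]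
          tight separations y])
  then show False using parallelogram_if_cnorm_diagonals \<open>\<not> parallelogram C\<close> by blast
qed

end

theorem lemma3p11:
  fixes C :: "(real^2) set" and V :: "'v set" and E :: "('v \<times> 'v) set"
    and p :: "'v \<Rightarrow> real^2" and r :: "'v \<Rightarrow> real"
  assumes "cs_convex_body C"
    and "C_packing C V E p r"
    and "\<not> parallelogram C"
  shows "planar_framework V E p"
proof -
  interpret planar_cs_body C by (rule planar_cs_body.intro) (fact assms(1))
  show ?thesis
    by (rule planar_frameworkI[OF inj_on_C_packing[OF assms(2)] sym_C_packing[OF assms(2)]
          C_packing_segments_common_end[OF assms(2)] C_packing_segments_disjoint[OF assms(2,3)]])
qed

end
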